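(* Let $0<p<1/2$ and $\alpha_p=\frac12\log_2\frac{1}{4p(1-p)}$. There exists a constant $C_p>0$ depending only on $p$ such that for all sufficiently large $n$ (with $pn$ an integer) and all integers $1\le d\le n$, $$\frac{\mathrm{Vol}(n,pn;d)}{\mathrm{Vol}(n,pn)}\le 2^{-\alpha_p d}\cdot C_p\sqrt{n}.$$
   Context: $\Delta$ is Hamming distance on $\mathbb{F}_2^n$, $\mathcal{B}(x,r)=\{y:\Delta(x,y)\le r\}$, $\mathrm{Vol}(n,r)=|\mathcal{B}(0^n,r)|$, and $\mathrm{Vol}(n,pn;d)=|\mathcal{B}(0^n,pn)\cap\mathcal{B}(1^d0^{n-d},pn)|$, the size of the intersection of two Hamming balls of radius $pn$ whose centers are at distance $d$. *)

theory Defs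
  imports "HOL-Analysis.Analysis"
begin

text \<open>Vectors of F_2^n are modelled as boolean lists of length n.\<close>

definition cube :: "nat \<Rightarrow> bool list set" where
  "cube n = {x. length x = n}"

definition hamming :: "bool list \<Rightarrow> bool list \<Rightarrow> nat" where
  "hamming x y = card {i. i < length x \<and> x ! i \<noteq> y ! i}"

definition hball :: "nat \<Rightarrow> bool list \<Rightarrow> nat \<Rightarrow> bool list set" where
  "hball n x r = {y \<in> cube n. hamming x y \<le> r}"

definition Vol :: "nat \<Rightarrow> nat \<Rightarrow> nat" where
  "Vol n r = card (hball n (replicate n False) r)"

definition Vol_int :: "nat \<Rightarrow> nat \<Rightarrow> nat \<Rightarrow> nat" where
  "Vol_int n r d = card (hball n (replicate n False) r
                         \<inter> hball n (replicate d True @ replicate (n - d) False) r)"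

end

theory Submission
  imports Defs "HOL-Probability.Hoeffding"
begin

text \<open>Give each y in the intersection of the two balls the weight x^(r - d/2 - e), where e counts the
  ones of y outside the first d coordinates: the two radius constraints add up to d + 2e \<le> 2r, so
  every weight is at least 1, while summed over the whole cube the weights factor coordinatewise
  into 2^d x^(r - d/2) (1 + 1/x)^(n - d). For x = (1 - p)/p this bound times p^r (1 - p)^(n - r)
  is exactly (4p(1 - p))^(d/2). On the other side Vol(n, r) \<ge> (n choose r), and
  (n choose r) p^r (1 - p)^(n - r) is the binomial probability at the mean r = pn, which is the
  mode; by Hoeffding's inequality it is at least 1/(6 sqrt n).\<close>

definition support :: "bool list \<Rightarrow> nat set" where
  "support y = {i. i < length y \<and> y ! i}"

lemma finite_cube: "finite (cube n)"
proof -
  have "cube n = {xs. set xs \<subseteq> (UNIV::bool set) \<and> length xs = n}" by (auto simp: cube_def)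
  thus ?thesis using finite_lists_length_eq[of "UNIV::bool set" n] by simp
qed

lemma bij_betw_support_cube: "bij_betw support (cube n) (Pow {..<n})"
proof (rule bij_betw_imageI)
  show "inj_on support (cube n)"
  proof (rule inj_onI)
    fix y z assume y: "y \<in> cube n" and z: "z \<in> cube n" and eq: "support y = support z"
    have "y ! i = z ! i" if "i < n" for i
    proof -
      have "(i \<in> support y) = (i \<in> support z)" using eq by simp
      thus ?thesis using that y z by (simp add: support_def cube_def)
    qed
    thus "y = z" using y z by (intro nth_equalityI) (auto simp: cube_def)
  qed
  show "support ` cube n = Pow {..<n}"
  proof
    show "support ` cube n \<subseteq> Pow {..<n}" by (auto simp: support_def cube_def)
    show "Pow {..<n} \<subseteq> support ` cube n"
    proof
      fix B assume "B \<in> Pow {..<n}"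
      hence "support (map (\<lambda>i. i \<in> B) [0..<n]) = B" by (auto simp: support_def)
      thus "B \<in> support ` cube n" by (force simp: cube_def)
    qed
  qed
qed

lemma hamming_zero:
  "length y = n \<Longrightarrow> hamming (replicate n False) y = card (support y)"
  unfolding hamming_def support_def by (auto intro!: arg_cong[where f=card])

lemma hamming_ones_zeros:
  assumes "length y = n" "d \<le> n"
  shows "hamming (replicate d True @ replicate (n - d) False) y
         = card (sym_diff {..<d} (support y))"
  unfolding hamming_def support_def using assms
  by (auto simp: nth_append intro!: arg_cong[where f=card])

lemma Vol_eq_card_Pow: "Vol n r = card {B \<in> Pow {..<n}. card B \<le> r}"
proof -
  have "hball n (replicate n False) r = {y \<in> cube n. card (support y) \<le> r}"
    by (auto simp: hball_def cube_def hamming_zero)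
  moreover have "bij_betw support {y \<in> cube n. card (support y) \<le> r} {B \<in> Pow {..<n}. card B \<le> r}"
  proof (rule bij_betw_subset[OF bij_betw_support_cube])
    have "support ` {y \<in> cube n. card (support y) \<le> r} = {B \<in> support ` cube n. card B \<le> r}"
      by auto
    then show "support ` {y \<in> cube n. card (support y) \<le> r} = {B \<in> Pow {..<n}. card B \<le> r}"
      by (simp add: bij_betw_imp_surj_on[OF bij_betw_support_cube])
  qed auto
  ultimately show ?thesis unfolding Vol_def by (simp add: bij_betw_same_card)
qed

lemma binomial_le_Vol: "n choose r \<le> Vol n r"
proof -
  have "n choose r = card {B. B \<subseteq> {..<n} \<and> card B = r}"
    using n_subsets[of "{..<n}" r] by simp
  also have "\<dots> \<le> card {B \<in> Pow {..<n}. card B \<le> r}"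
    by (intro card_mono) auto
  finally show ?thesis by (simp add: Vol_eq_card_Pow)
qed

lemma sum_Pow_power_card_Diff:
  fixes a :: real
  assumes "finite S"
  shows "(\<Sum>B\<in>Pow S. a ^ card (B - T)) = 2 ^ card (S \<inter> T) * (1 + a) ^ card (S - T)"
  using assms
proof (induction rule: finite_induct)
  case empty
  then show ?case by simp
next
  case (insert s S)
  have disj: "Pow S \<inter> insert s ` Pow S = {}" using insert.hyps by auto
  have inj: "inj_on (insert s) (Pow S)" using insert.hyps by (auto simp: inj_on_def)
  have card_insert_Diff: "card (insert s B - T) = (if s \<in> T then card (B - T) else Suc (card (B - T)))"
    if "B \<in> Pow S" for B
  proof -
    have "finite B" "s \<notin> B" using that insert.hyps finite_subset by auto
    thus ?thesis by (cases "s \<in> T") (auto simp: insert_Diff_if)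
  qed
  have "(\<Sum>B\<in>Pow (insert s S). a ^ card (B - T))
        = (\<Sum>B\<in>Pow S. a ^ card (B - T)) + (\<Sum>B\<in>insert s ` Pow S. a ^ card (B - T))"
    unfolding Pow_insert using disj insert.hyps by (intro sum.union_disjoint) auto
  also have "(\<Sum>B\<in>insert s ` Pow S. a ^ card (B - T)) = (\<Sum>B\<in>Pow S. a ^ card (insert s B - T))"
    using inj by (simp add: sum.reindex)
  also have "\<dots> = (if s \<in> T then 1 else a) * (\<Sum>B\<in>Pow S. a ^ card (B - T))"
    by (cases "s \<in> T") (auto simp: sum_distrib_left card_insert_Diff intro!: sum.cong)
  finally show ?case
    using insert.hyps insert.IH
    by (cases "s \<in> T") (auto simp: card_insert_if algebra_simps insert_Diff_if)
qed

lemma support_outside_le: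
  assumes y: "y \<in> hball n (replicate n False) r \<inter> hball n (replicate d True @ replicate (n - d) False) r"
    and "d \<le> n"
  shows "d + 2 * card (support y - {..<d}) \<le> 2 * r"
proof -
  define S where "S = support y"
  have ly: "length y = n" using y by (simp add: hball_def cube_def)
  have "finite S" by (simp add: S_def support_def)
  have in0: "card S \<le> r"
    using y hamming_zero[OF ly] by (simp add: hball_def S_def)
  have in1: "card (sym_diff {..<d} S) \<le> r"
    using y hamming_ones_zeros[OF ly \<open>d \<le> n\<close>] by (simp add: hball_def S_def)
  have "card S = card (S \<inter> {..<d}) + card (S - {..<d})"
    using \<open>finite S\<close> by (metis card_Int_Diff)
  moreover have "card ({..<d} - S) = d - card (S \<inter> {..<d})"
  proof -
    have "{..<d} - S = {..<d} - (S \<inter> {..<d})" by auto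
    thus ?thesis by (simp add: card_Diff_subset)
  qed
  moreover have "card (sym_diff {..<d} S) = card ({..<d} - S) + card (S - {..<d})"
    using \<open>finite S\<close> by (subst card_Un_disjoint) auto
  moreover have "card (S \<inter> {..<d}) \<le> d"
    using card_mono[of "{..<d}" "S \<inter> {..<d}"] by simp
  ultimately show ?thesis using in0 in1 unfolding S_def by linarith
qed

lemma Vol_int_le_weighted_sum:
  fixes x :: real
  assumes dn: "d \<le> n" and x1: "1 \<le> x"
  shows "real (Vol_int n r d) \<le> 2 ^ d * x powr (real r - real d / 2) * (1 + 1 / x) ^ (n - d)"
proof -
  define w where "w B = x powr (real r - real d / 2) * (1 / x) ^ card (B - {..<d})" for B :: "nat set"
  define I where "I = hball n (replicate n False) r
                      \<inter> hball n (replicate d True @ replicate (n - d) False) r"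
  have w_nonneg: "0 \<le> w B" for B using x1 by (simp add: w_def)
  have w_ge_1: "1 \<le> w (support y)" if "y \<in> I" for y
  proof -
    define e where "e = card (support y - {..<d})"
    have "w (support y) = x powr (real r - real d / 2 - real e)"
      using x1 by (simp add: w_def e_def powr_diff powr_realpow power_one_over)
    moreover have "0 \<le> real r - real d / 2 - real e"
      using support_outside_le[OF that[unfolded I_def] dn] unfolding e_def by linarith
    ultimately show ?thesis using x1 by (simp add: ge_one_powr_ge_zero)
  qed
  have "real (Vol_int n r d) = (\<Sum>y\<in>I. 1)" by (simp add: Vol_int_def I_def)
  also have "\<dots> \<le> (\<Sum>y\<in>I. w (support y))" using w_ge_1 by (intro sum_mono) auto
  also have "\<dots> \<le> (\<Sum>y\<in>cube n. w (support y))"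
    using finite_cube w_nonneg by (intro sum_mono2) (auto simp: I_def hball_def)
  also have "\<dots> = (\<Sum>B\<in>Pow {..<n}. w B)"
    using bij_betw_support_cube by (rule sum.reindex_bij_betw)
  also have "\<dots> = x powr (real r - real d / 2) * (\<Sum>B\<in>Pow {..<n}. (1 / x) ^ card (B - {..<d}))"
    by (simp add: w_def sum_distrib_left)
  also have "\<dots> = x powr (real r - real d / 2) * (2 ^ d * (1 + 1 / x) ^ (n - d))"
  proof -
    have "{..<n} \<inter> {..<d} = {..<d}" "{..<n} - {..<d} = {d..<n}" using dn by auto
    thus ?thesis by (simp add: sum_Pow_power_card_Diff)
  qed
  finally show ?thesis by (simp add: algebra_simps)
qed

lemma Vol_int_mult_binomial_weight_le:
  fixes p :: real
  assumes p0: "0 < p" and p_half: "p \<le> 1 / 2" and dn: "d \<le> n" and rn: "r \<le> n"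
  shows "real (Vol_int n r d) * (p ^ r * (1 - p) ^ (n - r)) \<le> (4 * p * (1 - p)) powr (real d / 2)"
proof -
  have q0: "0 < 1 - p" using p_half by simp
  define x where "x = (1 - p) / p"
  have x1: "1 \<le> x" using p0 p_half by (simp add: x_def field_simps)
  define L where "L = 2 ^ d * x powr (real r - real d / 2) * (1 + 1 / x) ^ (n - d) * (p ^ r * (1 - p) ^ (n - r))"
  have "1 + 1 / x = 1 / (1 - p)" using p0 q0 by (simp add: x_def field_simps)
  hence "ln L = real d * ln 2 + (real r - real d / 2) * (ln (1 - p) - ln p) - real (n - d) * ln (1 - p)
               + real r * ln p + real (n - r) * ln (1 - p)"
    unfolding L_def x_def using p0 q0 by (simp add: ln_mult ln_realpow ln_powr ln_div ln_inverse)
  also have "\<dots> = real d / 2 * (ln 4 + ln p + ln (1 - p))"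
    using dn rn ln_realpow[of 2 2] by (simp add: of_nat_diff algebra_simps)
  also have "\<dots> = ln ((4 * p * (1 - p)) powr (real d / 2))"
    using p0 q0 by (simp add: ln_powr ln_mult)
  finally have "ln L = ln ((4 * p * (1 - p)) powr (real d / 2))" .
  moreover have "0 < L" using x1 p0 q0 by (simp add: L_def add_pos_pos)
  moreover have "0 < (4 * p * (1 - p)) powr (real d / 2)" using p0 q0 by simp
  ultimately have "L = (4 * p * (1 - p)) powr (real d / 2)" by (metis ln_inj_iff)
  moreover have "real (Vol_int n r d) * (p ^ r * (1 - p) ^ (n - r)) \<le> L"
    unfolding L_def using Vol_int_le_weighted_sum[OF dn x1] p0 q0 by (simp add: mult_right_mono)
  ultimately show ?thesis by simp
qed

lemma pmf_binomial_Suc: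
  fixes p :: real
  assumes "0 \<le> p" "p \<le> 1" "j < n"
  shows "pmf (binomial_pmf n p) (Suc j) * (real (Suc j) * (1 - p))
         = pmf (binomial_pmf n p) j * (real (n - j) * p)"
proof -
  have choose: "real (Suc j) * real (n choose Suc j) = real (n - j) * real (n choose j)"
    using binomial_absorption[of j n] binomial_absorb_comp[of n j] by (metis of_nat_mult)
  have "(1 - p) ^ (n - j) = (1 - p) * (1 - p) ^ (n - Suc j)"
    using \<open>j < n\<close> by (simp add: Suc_diff_Suc[symmetric] power_Suc[symmetric] del: power_Suc)
  with choose show ?thesis using assms by (simp add: ac_simps)
qed

lemma pmf_binomial_le_mean:
  fixes p :: real
  assumes p0: "0 < p" and p1: "p < 1" and r: "real r = p * real n"
  shows "pmf (binomial_pmf n p) k \<le> pmf (binomial_pmf n p) r"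
proof -
  define P where "P = pmf (binomial_pmf n p)"
  have rn: "r \<le> n" using r p1 mult_right_mono[of p 1 "real n"] by simp
  have up: "P j \<le> P (Suc j)" if "j < r" for j
  proof -
    have "real (Suc j) \<le> real r" using that by simp
    hence "real (Suc j) * (1 - p) \<le> real (n - j) * p"
      using that rn r p0 by (simp add: of_nat_diff algebra_simps)
    hence "P j * (real (Suc j) * (1 - p)) \<le> P (Suc j) * (real (Suc j) * (1 - p))"
      using pmf_binomial_Suc[of p j n, folded P_def] that rn p0 p1
      by (metis less_le_trans mult_left_mono order.strict_implies_order pmf_nonneg P_def)
    thus ?thesis using p1 by (simp add: mult_le_cancel_right)
  qed
  have down: "P (Suc j) \<le> P j" if "r \<le> j" "j < n" for j
  proof -
    have "real r \<le> real j" using that by simp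
    hence "real (n - j) * p \<le> real (Suc j) * (1 - p)"
      using that r p1 by (simp add: of_nat_diff algebra_simps)
    hence "P (Suc j) * (real (Suc j) * (1 - p)) \<le> P j * (real (Suc j) * (1 - p))"
      using pmf_binomial_Suc[of p j n, folded P_def] that p0 p1
      by (metis mult_left_mono order.strict_implies_order pmf_nonneg P_def)
    thus ?thesis using p1 by (simp add: mult_le_cancel_right)
  qed
  consider "k \<le> r" | "r \<le> k" "k \<le> n" | "n < k" by linarith
  hence "P k \<le> P r"
  proof cases
    case 1
    then show ?thesis
    proof (induction rule: inc_induct)
      case (step m)
      then show ?case using up[of m] by simp
    qed simp
  next
    case 2
    then show ?thesis
    proof (induction rule: dec_induct)
      case (step m)
      then show ?case using down[of m] by simp
    qed simp
  next
    case 3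
    then show ?thesis using p0 p1 by (simp add: P_def binomial_eq_0)
  qed
  thus ?thesis by (simp add: P_def)
qed

lemma prob_binomial_near_mean:
  fixes p :: real
  assumes "0 \<le> p" "p \<le> 1" "0 < n"
  shows "1 / 2 \<le> measure_pmf.prob (binomial_pmf n p) {k. \<bar>real k - real n * p\<bar> < sqrt (real n)}"
proof -
  interpret binomial_distribution n p using assms by unfold_locales auto
  have "2 \<le> exp (1::real)" using exp_ge_add_one_self[of 1] by simp
  hence "2 * 2 \<le> exp (1::real) * exp 1" by (intro mult_mono) auto
  hence "4 \<le> exp (2::real)" by (simp add: exp_add[symmetric])
  hence "2 * exp (-2 * (sqrt (real n))\<^sup>2 / real n) \<le> 1 / 2"
    using \<open>0 < n\<close> by (simp add: exp_minus field_simps)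
  hence "measure_pmf.prob (binomial_pmf n p) {k. \<bar>real k - real n * p\<bar> \<ge> sqrt (real n)} \<le> 1 / 2"
    using prob_abs_ge[OF \<open>0 < n\<close>, of "sqrt (real n)"] by simp
  moreover have "{k. \<bar>real k - real n * p\<bar> \<ge> sqrt (real n)}
                 = UNIV - {k. \<bar>real k - real n * p\<bar> < sqrt (real n)}" by auto
  ultimately show ?thesis
    using measure_pmf.prob_compl[where A = "{k. \<bar>real k - real n * p\<bar> < sqrt (real n)}"]
    by simp
qed

text \<open>At most 2 sqrt n + 1 integers lie within sqrt n of the mean, and together they carry
  probability at least 1/2.\<close>

lemma pmf_binomial_mean_ge:
  fixes p :: real
  assumes p0: "0 < p" and p1: "p < 1" and n0: "0 < n" and r: "real r = p * real n"
  shows "1 / (6 * sqrt (real n)) \<le> pmf (binomial_pmf n p) r"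
proof -
  define B where "B = {k. \<bar>real k - real n * p\<bar> < sqrt (real n)}"
  define m where "m = nat \<lfloor>sqrt (real n)\<rfloor>"
  have B_sub: "B \<subseteq> {r - m .. r + m}"
  proof
    fix k assume "k \<in> B"
    hence "\<bar>int k - int r\<bar> \<le> \<lfloor>sqrt (real n)\<rfloor>"
      using r by (simp add: B_def le_floor_iff algebra_simps)
    thus "k \<in> {r - m .. r + m}" unfolding m_def by auto
  qed
  hence "finite B" by (rule finite_subset) simp
  have "1 / 2 \<le> measure_pmf.prob (binomial_pmf n p) B"
    unfolding B_def using prob_binomial_near_mean[of p n] p0 p1 n0 by simp
  also have "\<dots> = (\<Sum>k\<in>B. pmf (binomial_pmf n p) k)"
    using \<open>finite B\<close> by (rule measure_measure_pmf_finite)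
  also have "\<dots> \<le> real (card B) * pmf (binomial_pmf n p) r"
    using sum_mono[of B _ "\<lambda>_. pmf (binomial_pmf n p) r"] pmf_binomial_le_mean[OF p0 p1 r] by simp
  also have "\<dots> \<le> 3 * sqrt (real n) * pmf (binomial_pmf n p) r"
  proof (rule mult_right_mono)
    have "card B \<le> 2 * m + 1" using card_mono[OF _ B_sub] by simp
    moreover have "real m \<le> sqrt (real n)" "1 \<le> sqrt (real n)" using n0 by (simp_all add: m_def)
    ultimately show "real (card B) \<le> 3 * sqrt (real n)" by linarith
  qed simp
  finally show ?thesis using n0 by (simp add: field_simps)
qed

lemma two_powr_neg_half_log:
  fixes y :: real
  assumes "0 < y"
  shows "2 powr (- ((1/2) * log 2 (1 / y)) * t) = y powr (t / 2)"
proof -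
  have "2 powr (- ((1/2) * log 2 (1 / y)) * t) = 2 powr (log 2 y * (t / 2))"
    using assms by (simp add: log_divide)
  also have "\<dots> = (2 powr log 2 y) powr (t / 2)"
    by (rule powr_powr[symmetric])
  also have "\<dots> = y powr (t / 2)"
    using assms by simp
  finally show ?thesis .
qed

theorem lemma9:
  fixes p :: real
  assumes "0 < p" and "p < 1/2"
  shows "\<exists>C > 0. \<exists>N. \<forall>n \<ge> N. \<forall>r :: nat. real r = p * real n \<longrightarrow>
           (\<forall>d. 1 \<le> d \<and> d \<le> n \<longrightarrow>
              real (Vol_int n r d) / real (Vol n r)
                \<le> 2 powr (- ((1/2) * log 2 (1 / (4 * p * (1 - p)))) * real d) * C * sqrt (real n))"
proof (intro exI[of _ "6::real"] conjI exI[of _ "1::nat"] allI impI)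
  fix n r d :: nat
  assume n: "1 \<le> n" and r: "real r = p * real n" and d: "1 \<le> d \<and> d \<le> n"
  define s where "s = p ^ r * (1 - p) ^ (n - r)"
  have rn: "r \<le> n" using r assms mult_right_mono[of p 1 "real n"] by simp
  have binomial_pos: "0 < real (n choose r)" using rn by simp
  have "1 / (6 * sqrt (real n)) \<le> real (n choose r) * s"
    using pmf_binomial_mean_ge[of p n r] assms n r by (simp add: s_def mult.assoc)
  hence inv_binomial_le: "1 / real (n choose r) \<le> 6 * sqrt (real n) * s"
    using n binomial_pos by (simp add: field_simps)
  have "real (Vol_int n r d) / real (Vol n r) \<le> real (Vol_int n r d) / real (n choose r)"
  proof (rule divide_left_mono)
    show "real (n choose r) \<le> real (Vol n r)" using binomial_le_Vol[of n r] by simp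
    then show "0 < real (Vol n r) * real (n choose r)"
      using binomial_pos by (intro mult_pos_pos) linarith+
  qed simp
  also have "\<dots> \<le> real (Vol_int n r d) * s * (6 * sqrt (real n))"
    using mult_left_mono[OF inv_binomial_le, of "real (Vol_int n r d)"] by (simp add: ac_simps)
  also have "\<dots> \<le> (4 * p * (1 - p)) powr (real d / 2) * 6 * sqrt (real n)"
    using Vol_int_mult_binomial_weight_le[of p d n r] assms d rn
    by (simp add: s_def mult_right_mono)
  also have "(4 * p * (1 - p)) powr (real d / 2)
             = 2 powr (- ((1/2) * log 2 (1 / (4 * p * (1 - p)))) * real d)"
    using assms by (intro two_powr_neg_half_log[symmetric] mult_pos_pos) auto
  finally show "real (Vol_int n r d) / real (Vol n r)
                \<le> 2 powr (- ((1/2) * log 2 (1 / (4 * p * (1 - p)))) * real d) * 6 * sqrt (real n)" .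
qed simp

end
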